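(* On any non-atomic probability space $(\mathbb{X},\mathcal{X},\mu)$ with an invertible measure-preserving ergodic transformation $T$, there exists a finite measurable function $f:\mathbb{X}\to\mathbb{R}$ such that, $\mu$-a.e., $$\limsup_n A_n^+f=+\infty,\qquad \liminf_n A_n^+f=-\infty,\qquad \lim_n A_n^-f=+\infty.$$
   Context: For measurable $f:\mathbb{X}\to\mathbb{R}$ and $n\ge1$: $A_n^+f=\frac1n\sum_{i=0}^{n-1}f\circ T^i$ and $A_n^-f=\frac1n\sum_{i=0}^{n-1}f\circ T^{-i}$. *)

theory Defs
  imports "HOL-Probability.Probability"
begin

definition non_atomic :: "'a measure \<Rightarrow> bool" where
  "non_atomic M \<longleftrightarrow> (\<forall>A\<in>sets M. measure M A > 0 \<longrightarrow>
      (\<exists>B\<in>sets M. B \<subseteq> A \<and> 0 < measure M B \<and> measure M B < measure M A))"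

definition measure_preserving_map :: "'a measure \<Rightarrow> ('a \<Rightarrow> 'a) \<Rightarrow> bool" where
  "measure_preserving_map M T \<longleftrightarrow> T \<in> M \<rightarrow>\<^sub>M M \<and> distr M M T = M"

definition invertible_map :: "'a measure \<Rightarrow> ('a \<Rightarrow> 'a) \<Rightarrow> bool" where
  "invertible_map M T \<longleftrightarrow> bij_betw T (space M) (space M) \<and>
      inv_into (space M) T \<in> M \<rightarrow>\<^sub>M M"

definition ergodic_map :: "'a measure \<Rightarrow> ('a \<Rightarrow> 'a) \<Rightarrow> bool" where
  "ergodic_map M T \<longleftrightarrow> (\<forall>A\<in>sets M. T -` A \<inter> space M = A \<longrightarrow>
      measure M A = 0 \<or> measure M A = 1)"

definition avg_plus :: "('a \<Rightarrow> 'a) \<Rightarrow> ('a \<Rightarrow> real) \<Rightarrow> nat \<Rightarrow> 'a \<Rightarrow> real" where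
  "avg_plus T f n x = (\<Sum>i<n. f ((T ^^ i) x)) / real n"

definition avg_minus :: "'a measure \<Rightarrow> ('a \<Rightarrow> 'a) \<Rightarrow> ('a \<Rightarrow> real) \<Rightarrow> nat \<Rightarrow> 'a \<Rightarrow> real" where
  "avg_minus M T f n x = (\<Sum>i<n. f ((inv_into (space M) T ^^ i) x)) / real n"

end

theory Submission
  imports Defs
begin

text \<open>Write \<open>S = T\<^sup>-\<^sup>1\<close>. By non-atomicity there are decreasing sequences \<open>B\<^sub>k\<close>, \<open>D\<^sub>j\<close> of sets
  of positive measure with empty intersections such that \<open>T\<close> maps every \<open>B\<^sub>k\<close> outside every
  \<open>D\<^sub>j\<close>. Let \<open>g = \<Sum>\<^sub>k 1\<^bsub>B\<^sub>k\<^esub> r\<^sub>k\<close>, where \<open>r\<^sub>k\<close> is the \<open>S\<close>-return time to \<open>B\<^sub>k\<close>. Along an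
  \<open>S\<close>-orbit the return times to \<open>B\<^sub>k\<close> telescope (Kac), so by recurrence the backward averages
  of \<open>g\<close> exceed every \<open>K\<close> eventually, and the forward averages up to a visit to \<open>B\<^sub>K\<close>, being
  backward averages read in reverse, exceed \<open>K\<close> infinitely often.

  The function is \<open>f = g + u - u \<circ> T\<close> with \<open>u = \<Sum>\<^sub>j j 1\<^bsub>D\<^sub>j\<^esub> w\<^sub>j\<close>, where \<open>w\<^sub>j(y)\<close> is the
  length of the \<open>S\<close>-excursion from \<open>y\<close> back to \<open>D\<^sub>j\<close>, each step weighted by \<open>1 + g\<close>. The
  coboundary keeps both estimates above (\<open>u \<ge> 0\<close>, and \<open>u\<close> vanishes right after a visit to
  \<open>B\<^sub>K\<close>), but at the first forward visit to \<open>D\<^sub>j\<close> it drops by at least \<open>j\<close> times the elapsed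
  time plus the forward sum of \<open>g\<close>, pushing the forward averages below every bound infinitely
  often.\<close>

section \<open>Hits of a predicate on the naturals\<close>

definition next_hit :: "(nat \<Rightarrow> bool) \<Rightarrow> nat \<Rightarrow> nat" where
  "next_hit a i = (LEAST j. i \<le> j \<and> a j)"

lemma
  assumes "frequently a sequentially"
  shows next_hit_ge: "i \<le> next_hit a i"
    and next_hit_hits: "a (next_hit a i)"
    and next_hit_least: "i \<le> j \<Longrightarrow> a j \<Longrightarrow> next_hit a i \<le> j"
proof -
  obtain k where "i \<le> k" "a k"
    using assms by (auto simp: frequently_sequentially)
  then have "i \<le> next_hit a i \<and> a (next_hit a i)"
    using LeastI[of "\<lambda>j. i \<le> j \<and> a j" k] unfolding next_hit_def by blast
  then show "i \<le> next_hit a i" "a (next_hit a i)" by auto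
  show "i \<le> j \<Longrightarrow> a j \<Longrightarrow> next_hit a i \<le> j"
    unfolding next_hit_def by (simp add: Least_le)
qed

lemma next_hit_eq_self: "a i \<Longrightarrow> next_hit a i = i"
  unfolding next_hit_def by (rule Least_equality) auto

lemma next_hit_Suc:
  assumes "frequently a sequentially"
  shows "next_hit a (Suc i) =
    (if a i then i + (LEAST m. 1 \<le> m \<and> a (i + m)) else next_hit a i)"
proof (cases "a i")
  case True
  have "(LEAST m. 1 \<le> m \<and> a (i + m)) = next_hit a (Suc i) - i"
  proof (rule Least_equality)
    show "1 \<le> next_hit a (Suc i) - i \<and> a (i + (next_hit a (Suc i) - i))"
      using next_hit_ge[OF assms, of "Suc i"] next_hit_hits[OF assms] by auto
    show "next_hit a (Suc i) - i \<le> m" if "1 \<le> m \<and> a (i + m)" for m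
      using next_hit_least[OF assms, of "Suc i" "i + m"] that by auto
  qed
  then show ?thesis
    using True next_hit_ge[OF assms, of "Suc i"] by simp
next
  case False
  have "next_hit a i \<noteq> i"
    using False next_hit_hits[OF assms] by metis
  then have "Suc i \<le> next_hit a i"
    using next_hit_ge[OF assms, of i] by simp
  then have "next_hit a (Suc i) = next_hit a i"
    using next_hit_ge[OF assms] next_hit_hits[OF assms] next_hit_least[OF assms]
    by (meson Suc_leD le_antisym)
  then show ?thesis using False by simp
qed

lemma sum_gaps_eq_next_hit:
  assumes "frequently a sequentially"
  shows "(\<Sum>i<n. if a i then real (LEAST m. 1 \<le> m \<and> a (i + m)) else 0)
    = real (next_hit a n) - real (next_hit a 0)"
  by (induction n) (auto simp: next_hit_Suc[OF assms] next_hit_eq_self)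

section \<open>Non-atomic probability spaces\<close>

lemma (in prob_space) non_atomic_half_subset:
  assumes "non_atomic M" "A \<in> sets M" "0 < measure M A"
  obtains B where "B \<in> sets M" "B \<subseteq> A" "0 < measure M B" "measure M B \<le> measure M A / 2"
proof -
  obtain B where B: "B \<in> sets M" "B \<subseteq> A" "0 < measure M B" "measure M B < measure M A"
    using assms unfolding non_atomic_def by blast
  have "measure M (A - B) = measure M A - measure M B"
    using finite_measure_Diff[OF assms(2) B(1,2)] .
  then show ?thesis
    using that[of B] that[of "A - B"] B assms(2) by (cases "measure M B \<le> measure M A / 2") auto
qed

text \<open>Iterated halving gives sets of measure at most \<open>\<mu>(A)/2^k\<close>; removing their null
  intersection makes the intersection empty.\<close>
lemma (in prob_space) non_atomic_vanishing_decseq: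
  assumes "non_atomic M" "A \<in> sets M" "0 < measure M A"
  obtains B :: "nat \<Rightarrow> 'a set"
  where "\<And>k. B k \<in> sets M" "\<And>k. B k \<subseteq> A" "\<And>k. 0 < measure M (B k)"
    "decseq B" "(\<Inter>k. B k) = {}"
proof -
  have "\<exists>h. \<forall>C. C \<in> sets M \<and> 0 < measure M C \<longrightarrow>
      h C \<in> sets M \<and> h C \<subseteq> C \<and> 0 < measure M (h C) \<and> measure M (h C) \<le> measure M C / 2"
    by (rule choice) (metis non_atomic_half_subset[OF assms(1)])
  then obtain h where h: "\<And>C. C \<in> sets M \<Longrightarrow> 0 < measure M C \<Longrightarrow>
      h C \<in> sets M \<and> h C \<subseteq> C \<and> 0 < measure M (h C) \<and> measure M (h C) \<le> measure M C / 2"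
    by blast
  define C where "C k = (h ^^ k) A" for k
  have C: "C k \<in> sets M \<and> C k \<subseteq> A \<and> 0 < measure M (C k) \<and> measure M (C k) \<le> measure M A / 2 ^ k" for k
  proof (induction k)
    case (Suc k)
    then have "C (Suc k) \<in> sets M \<and> C (Suc k) \<subseteq> C k \<and> 0 < measure M (C (Suc k))
        \<and> measure M (C (Suc k)) \<le> measure M (C k) / 2"
      using h[of "C k"] by (simp add: C_def)
    moreover have "measure M (C k) / 2 \<le> measure M A / 2 ^ Suc k"
      using Suc by simp
    ultimately show ?case
      using Suc by auto
  qed (use assms in \<open>simp add: C_def\<close>)
  have "decseq C"
    by (rule decseq_SucI) (use h C in \<open>simp add: C_def\<close>)
  define I where "I = (\<Inter>k. C k)"
  have I: "I \<in> sets M" "\<And>k. I \<subseteq> C k"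
    using C by (auto simp: I_def)
  have "measure M I \<le> measure M A / 2 ^ k" for k
    using finite_measure_mono[OF I(2)[of k]] C[of k] by linarith
  then have "measure M I \<le> 0"
    by (intro LIMSEQ_le_const[OF LIMSEQ_divide_realpow_zero[of 2 "measure M A"]]) auto
  then have "measure M I = 0"
    by (simp add: measure_le_0_iff)
  show ?thesis
  proof (rule that[of "\<lambda>k. C k - I"])
    show "0 < measure M (C k - I)" for k
      using finite_measure_Diff[OF conjunct1[OF C] I(1) I(2)] \<open>measure M I = 0\<close> C[of k] by simp
    show "decseq (\<lambda>k. C k - I)"
      using \<open>decseq C\<close> by (auto simp: decseq_def)
  qed (use C I in \<open>auto simp: I_def\<close>)
qed

section \<open>Measure-preserving maps and recurrence\<close>

lemma measurable_funpow [measurable]: "S \<in> M \<rightarrow>\<^sub>M M \<Longrightarrow> S ^^ n \<in> M \<rightarrow>\<^sub>M M"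
  by (induction n) (auto simp: funpow_Suc_right)

lemma measure_preserving_map_funpow:
  assumes "measure_preserving_map M S"
  shows "measure_preserving_map M (S ^^ n)"
proof (induction n)
  case (Suc n)
  have S: "S \<in> M \<rightarrow>\<^sub>M M" "distr M M S = M"
    using assms by (auto simp: measure_preserving_map_def)
  have "distr M M (S ^^ Suc n) = distr (distr M M S) M (S ^^ n)"
    by (simp add: distr_distr[OF measurable_funpow[OF S(1)] S(1)] funpow_Suc_right del: funpow.simps)
  then show ?case
    using Suc S by (simp add: measure_preserving_map_def del: funpow.simps)
qed (simp add: measure_preserving_map_def)

lemma measure_preserving_map_measure_vimage:
  assumes "measure_preserving_map M S" "U \<in> sets M"
  shows "measure M (S -` U \<inter> space M) = measure M U"
  using assms measure_distr[OF _ assms(2), of S M] by (simp add: measure_preserving_map_def)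

text \<open>The set of points returning to \<open>A\<close> infinitely often is invariant and, as the
  decreasing limit of the sets \<open>S\<^sup>-\<^sup>N(\<Union>\<^sub>n S\<^sup>-\<^sup>n A)\<close> of equal measure, has measure at least \<open>\<mu>(A)\<close>.\<close>
lemma (in prob_space) ergodic_recurrence:
  assumes mp: "measure_preserving_map M S" and erg: "ergodic_map M S"
    and A: "A \<in> sets M" "0 < measure M A"
  shows "AE x in M. \<exists>\<^sub>F n in sequentially. (S ^^ n) x \<in> A"
proof -
  have [measurable]: "S \<in> M \<rightarrow>\<^sub>M M" "A \<in> sets M"
    using mp A by (auto simp: measure_preserving_map_def)
  define W where "W N = {x \<in> space M. \<exists>n\<ge>N. (S ^^ n) x \<in> A}" for N
  have W_sets: "W N \<in> sets M" for N
    unfolding W_def by measurable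
  have shift: "(S ^^ n) ((S ^^ N) x) = (S ^^ (n + N)) x" for n N x
    by (simp add: funpow_add)
  have W_shift: "W N = (S ^^ N) -` W 0 \<inter> space M" for N
    using measurable_space[OF measurable_funpow[of S M]]
    by (auto simp: W_def shift) (metis le_add_diff_inverse2, metis le_add2)
  have W_measure: "measure M (W N) = measure M (W 0)" for N
    by (subst W_shift)
      (rule measure_preserving_map_measure_vimage[OF measure_preserving_map_funpow[OF mp] W_sets])
  have "decseq W"
    by (auto simp: decseq_def W_def intro: order_trans)
  define E where "E = {x \<in> space M. \<exists>\<^sub>F n in sequentially. (S ^^ n) x \<in> A}"
  have E_eq: "E = (\<Inter>N. W N)"
    by (auto simp: E_def W_def frequently_sequentially)
  have E_sets: "E \<in> sets M"
    using W_sets by (auto simp: E_eq)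
  have "(\<lambda>N. measure M (W N)) \<longlonglongrightarrow> measure M E"
    unfolding E_eq by (rule finite_Lim_measure_decseq) (use W_sets \<open>decseq W\<close> in auto)
  moreover have "(\<lambda>N. measure M (W N)) = (\<lambda>_. measure M (W 0))"
    by (rule ext) (rule W_measure)
  ultimately have "measure M E = measure M (W 0)"
    by (simp add: LIMSEQ_const_iff)
  also have "measure M A \<le> measure M (W 0)"
    using sets.sets_into_space[OF A(1)] W_sets
    by (intro finite_measure_mono) (auto simp: W_def intro!: exI[of _ 0])
  finally have "0 < measure M E"
    using A(2) by linarith
  moreover have "S -` E \<inter> space M = E"
  proof -
    have "(\<exists>\<^sub>F n in sequentially. (S ^^ n) (S x) \<in> A) \<longleftrightarrow> (\<exists>\<^sub>F n in sequentially. (S ^^ n) x \<in> A)" for x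
      using eventually_sequentially_Suc[of "\<lambda>n. (S ^^ n) x \<notin> A"]
      by (simp add: frequently_def funpow_swap1)
    then show ?thesis
      using measurable_space[of S M M] by (auto simp: E_def)
  qed
  ultimately have "measure M E = 1"
    using erg E_sets by (auto simp: ergodic_map_def)
  then show ?thesis
    by (auto simp: E_def dest: AE_prob_1)
qed

lemma measure_preserving_map_inverse:
  assumes mp: "measure_preserving_map M T" and inv: "invertible_map M T"
  shows "measure_preserving_map M (inv_into (space M) T)"
proof -
  let ?S = "inv_into (space M) T"
  have T: "T \<in> M \<rightarrow>\<^sub>M M" "distr M M T = M" and S: "?S \<in> M \<rightarrow>\<^sub>M M"
    and bij: "bij_betw T (space M) (space M)"
    using mp inv by (auto simp: measure_preserving_map_def invertible_map_def)
  have "distr M M ?S = M"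
  proof (rule measure_eqI)
    fix U assume U: "U \<in> sets (distr M M ?S)"
    then have "T -` (?S -` U \<inter> space M) \<inter> space M = U"
      using bij sets.sets_into_space[of U M] measurable_space[OF T(1)]
      by (auto simp: bij_betw_imp_inj_on)
    moreover have "emeasure M V = emeasure M (T -` V \<inter> space M)" if "V \<in> sets M" for V
      using emeasure_distr[OF T(1) that] T(2) by simp
    ultimately show "emeasure (distr M M ?S) U = emeasure M U"
      using U emeasure_distr[OF S] measurable_sets[OF S] by auto
  qed simp
  then show ?thesis
    using S by (simp add: measure_preserving_map_def)
qed

lemma ergodic_map_inverse:
  assumes inv: "invertible_map M T" and erg: "ergodic_map M T"
  shows "ergodic_map M (inv_into (space M) T)"
  unfolding ergodic_map_def
proof (intro ballI impI)
  fix A assume A: "A \<in> sets M" "inv_into (space M) T -` A \<inter> space M = A"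
  have bij: "bij_betw T (space M) (space M)"
    using inv by (simp add: invertible_map_def)
  have "T x \<in> A \<longleftrightarrow> x \<in> A" if "x \<in> space M" for x
  proof -
    have "T x \<in> A \<longleftrightarrow> T x \<in> inv_into (space M) T -` A \<inter> space M"
      by (simp only: A(2))
    also have "\<dots> \<longleftrightarrow> x \<in> A"
      using that bij_betw_apply[OF bij that] inv_into_f_f[OF bij_betw_imp_inj_on[OF bij] that]
      by simp
    finally show ?thesis .
  qed
  then have "T -` A \<inter> space M = A"
    using sets.sets_into_space[OF A(1)] by auto
  then show "measure M A = 0 \<or> measure M A = 1"
    using erg A(1) by (simp add: ergodic_map_def)
qed

section \<open>Return times and the oscillating function\<close>

text \<open>If the orbit never re-enters \<open>A\<close>, this is an unspecified number.\<close>
definition return_time :: "('a \<Rightarrow> 'a) \<Rightarrow> 'a set \<Rightarrow> 'a \<Rightarrow> nat" where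
  "return_time S A x = (LEAST m. 1 \<le> m \<and> (S ^^ m) x \<in> A)"

lemma
  assumes "\<exists>\<^sub>F n in sequentially. (S ^^ n) x \<in> A"
  shows return_time_ge_1: "1 \<le> return_time S A x"
    and return_time_returns: "(S ^^ return_time S A x) x \<in> A"
proof -
  obtain n where "1 \<le> n" "(S ^^ n) x \<in> A"
    using assms by (auto simp: frequently_sequentially)
  then show "1 \<le> return_time S A x" "(S ^^ return_time S A x) x \<in> A"
    using LeastI[of "\<lambda>m. 1 \<le> m \<and> (S ^^ m) x \<in> A" n] by (auto simp: return_time_def)
qed

lemma return_time_le: "1 \<le> n \<Longrightarrow> (S ^^ n) x \<in> A \<Longrightarrow> return_time S A x \<le> n"
  unfolding return_time_def by (simp add: Least_le)

text \<open>For a decreasing \<open>B\<close> with empty intersection the series has finitely many nonzero terms;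
  otherwise its value is unspecified. The same applies to \<open>weighted_excursions\<close>.\<close>
definition return_time_sum :: "('a \<Rightarrow> 'a) \<Rightarrow> (nat \<Rightarrow> 'a set) \<Rightarrow> 'a \<Rightarrow> real" where
  "return_time_sum S B x = (\<Sum>k. if x \<in> B k then real (return_time S (B k) x) else 0)"

definition excursion_weight :: "('a \<Rightarrow> 'a) \<Rightarrow> ('a \<Rightarrow> real) \<Rightarrow> 'a set \<Rightarrow> 'a \<Rightarrow> real" where
  "excursion_weight S g A x = (\<Sum>i<return_time S A x. 1 + g ((S ^^ Suc i) x))"

definition weighted_excursions ::
    "('a \<Rightarrow> 'a) \<Rightarrow> ('a \<Rightarrow> real) \<Rightarrow> (nat \<Rightarrow> 'a set) \<Rightarrow> 'a \<Rightarrow> real" where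
  "weighted_excursions S g D x =
    (\<Sum>j. if x \<in> D j then real j * excursion_weight S g (D j) x else 0)"

text \<open>\<open>S\<close> plays the role of \<open>T\<^sup>-\<^sup>1\<close>.\<close>
definition oscillating_function ::
    "('a \<Rightarrow> 'a) \<Rightarrow> ('a \<Rightarrow> 'a) \<Rightarrow> (nat \<Rightarrow> 'a set) \<Rightarrow> (nat \<Rightarrow> 'a set) \<Rightarrow> 'a \<Rightarrow> real" where
  "oscillating_function T S B D x =
    return_time_sum S B x + weighted_excursions S (return_time_sum S B) D x
      - weighted_excursions S (return_time_sum S B) D (T x)"

lemma measurable_return_time [measurable]:
  assumes [measurable]: "S \<in> M \<rightarrow>\<^sub>M M" "A \<in> sets M"
  shows "return_time S A \<in> M \<rightarrow>\<^sub>M count_space UNIV"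
  unfolding return_time_def by measurable

lemma borel_measurable_return_time_sum [measurable]:
  assumes [measurable]: "S \<in> M \<rightarrow>\<^sub>M M" "\<And>k. B k \<in> sets M"
  shows "return_time_sum S B \<in> borel_measurable M"
  unfolding return_time_sum_def by measurable

lemma borel_measurable_excursion_weight [measurable]:
  assumes [measurable]: "S \<in> M \<rightarrow>\<^sub>M M" "g \<in> borel_measurable M" "A \<in> sets M"
  shows "excursion_weight S g A \<in> borel_measurable M"
proof -
  have "(\<lambda>x. \<Sum>i<n. 1 + g ((S ^^ Suc i) x)) \<in> borel_measurable M" for n
    by measurable
  then show ?thesis
    unfolding excursion_weight_def
    by (rule measurable_compose_countable'[OF _ measurable_return_time]) auto
qed

lemma borel_measurable_oscillating_function:
  assumes [measurable]: "T \<in> M \<rightarrow>\<^sub>M M" "S \<in> M \<rightarrow>\<^sub>M M"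
    "\<And>k. B k \<in> sets M" "\<And>j. D j \<in> sets M"
  shows "oscillating_function T S B D \<in> borel_measurable M"
  unfolding oscillating_function_def weighted_excursions_def by measurable

lemma eventually_not_mem_vanishing_decseq:
  assumes "decseq B" "(\<Inter>k. B k) = {}"
  shows "\<forall>\<^sub>F k in sequentially. x \<notin> B k"
proof -
  obtain k0 where "x \<notin> B k0"
    using assms(2) by blast
  then show ?thesis
    using assms(1) by (auto simp: eventually_sequentially decseq_def)
qed

lemma summable_if_mem_vanishing_decseq:
  assumes "decseq B" "(\<Inter>k. B k) = {}"
  shows "summable (\<lambda>k. if x \<in> B k then c k else (0::real))"
proof (rule summable_finite)
  show "finite {k. x \<in> B k}"
    using eventually_not_mem_vanishing_decseq[OF assms, of x]
    by (simp add: cofinite_eq_sequentially[symmetric] eventually_cofinite)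
qed auto

lemma
  assumes "decseq B" "(\<Inter>k. B k) = {}"
  shows return_time_sum_nonneg: "0 \<le> return_time_sum S B x"
    and sum_le_return_time_sum:
      "(\<Sum>k<K. if x \<in> B k then real (return_time S (B k) x) else 0) \<le> return_time_sum S B x"
proof -
  let ?a = "\<lambda>k. if x \<in> B k then real (return_time S (B k) x) else 0"
  have "summable ?a" "\<And>k. 0 \<le> ?a k"
    using summable_if_mem_vanishing_decseq[OF assms] by auto
  then show "0 \<le> return_time_sum S B x" "sum ?a {..<K} \<le> return_time_sum S B x"
    unfolding return_time_sum_def by (auto intro: suminf_nonneg sum_le_suminf)
qed

lemma excursion_weight_nonneg: "(\<And>x. 0 \<le> g x) \<Longrightarrow> 0 \<le> excursion_weight S g A x"
  unfolding excursion_weight_def by (auto intro: sum_nonneg add_nonneg_nonneg)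

lemma
  assumes "decseq D" "(\<Inter>j. D j) = {}" "\<And>x. 0 \<le> g x"
  shows weighted_excursions_nonneg: "0 \<le> weighted_excursions S g D x"
    and excursion_weight_le_weighted_excursions:
      "x \<in> D j \<Longrightarrow> real j * excursion_weight S g (D j) x \<le> weighted_excursions S g D x"
proof -
  let ?a = "\<lambda>j. if x \<in> D j then real j * excursion_weight S g (D j) x else 0"
  have a: "summable ?a" "\<And>j. 0 \<le> ?a j"
    using summable_if_mem_vanishing_decseq[OF assms(1,2)]
      excursion_weight_nonneg[where g = g, OF assms(3)] by auto
  show "0 \<le> weighted_excursions S g D x"
    unfolding weighted_excursions_def by (rule suminf_nonneg[OF a])
  show "real j * excursion_weight S g (D j) x \<le> weighted_excursions S g D x" if "x \<in> D j"
    using sum_le_suminf[OF a(1), of "{j}"] a(2) that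
    unfolding weighted_excursions_def by simp
qed

lemma weighted_excursions_eq_0: "(\<And>j. x \<notin> D j) \<Longrightarrow> weighted_excursions S g D x = 0"
  unfolding weighted_excursions_def by simp

text \<open>Kac's telescoping: along an orbit, the return times to \<open>B k\<close> at the visits add up to
  the gaps between consecutive visits.\<close>
lemma sum_return_time_sum_orbit_ge:
  assumes "decseq B" "(\<Inter>k. B k) = {}" "\<And>k. \<exists>\<^sub>F i in sequentially. (S ^^ i) x \<in> B k"
  shows "(\<Sum>k<K. real n - real (next_hit (\<lambda>i. (S ^^ i) x \<in> B k) 0))
    \<le> (\<Sum>i<n. return_time_sum S B ((S ^^ i) x))"
proof -
  let ?hit = "\<lambda>k i. (S ^^ i) x \<in> B k"
  have return_time_orbit:
    "return_time S (B k) ((S ^^ i) x) = (LEAST m. 1 \<le> m \<and> ?hit k (i + m))" for k i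
    unfolding return_time_def by (simp add: funpow_add add.commute)
  have "(\<Sum>k<K. real n - real (next_hit (?hit k) 0))
      \<le> (\<Sum>k<K. real (next_hit (?hit k) n) - real (next_hit (?hit k) 0))"
    by (intro sum_mono) (simp add: next_hit_ge[OF assms(3)])
  also have "\<dots> = (\<Sum>k<K. \<Sum>i<n. if ?hit k i then real (return_time S (B k) ((S ^^ i) x)) else 0)"
    unfolding return_time_orbit by (intro sum.cong refl sum_gaps_eq_next_hit[OF assms(3), symmetric])
  also have "\<dots> = (\<Sum>i<n. \<Sum>k<K. if ?hit k i then real (return_time S (B k) ((S ^^ i) x)) else 0)"
    by (rule sum.swap)
  also have "\<dots> \<le> (\<Sum>i<n. return_time_sum S B ((S ^^ i) x))"
    by (intro sum_mono sum_le_return_time_sum[OF assms(1,2)])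
  finally show ?thesis .
qed

lemma sum_orbit_oscillating_function:
  "(\<Sum>i<n. oscillating_function T S B D ((T ^^ i) x)) =
    (\<Sum>i<n. return_time_sum S B ((T ^^ i) x)) + weighted_excursions S (return_time_sum S B) D x
      - weighted_excursions S (return_time_sum S B) D ((T ^^ n) x)"
  by (induction n) (auto simp: oscillating_function_def)

section \<open>The averages along ergodic automorphisms\<close>

lemma limsup_eq_PInfty_if_frequently_ge:
  fixes X :: "nat \<Rightarrow> real"
  assumes "\<And>c. \<exists>\<^sub>F n in sequentially. c \<le> X n"
  shows "limsup (\<lambda>n. ereal (X n)) = \<infinity>"
proof (rule ccontr)
  assume "limsup (\<lambda>n. ereal (X n)) \<noteq> \<infinity>"
  then obtain r :: nat where "limsup (\<lambda>n. ereal (X n)) < ereal (real r)"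
    using less_PInf_Ex_of_nat by blast
  then have "\<forall>\<^sub>F n in sequentially. X n < real r"
    by (auto dest: Limsup_lessD)
  then show False
    using assms[of r] by (simp add: frequently_def not_le)
qed

lemma liminf_eq_MInfty_if_frequently_le:
  fixes X :: "nat \<Rightarrow> real"
  assumes "\<And>c. \<exists>\<^sub>F n in sequentially. X n \<le> c"
  shows "liminf (\<lambda>n. ereal (X n)) = -\<infinity>"
proof -
  have "limsup (\<lambda>n. ereal (- X n)) = \<infinity>"
  proof (rule limsup_eq_PInfty_if_frequently_ge)
    show "\<exists>\<^sub>F n in sequentially. c \<le> - X n" for c
      using assms[of "- c"] by (simp add: le_minus_iff)
  qed
  then show ?thesis
    using ereal_Liminf_uminus[of sequentially "\<lambda>n. ereal (- X n)"] by simp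
qed

locale ergodic_automorphism = prob_space M for M :: "'a measure" +
  fixes T :: "'a \<Rightarrow> 'a"
  assumes measure_preserving: "measure_preserving_map M T"
    and invertible: "invertible_map M T"
    and ergodic: "ergodic_map M T"
begin

abbreviation Tinv :: "'a \<Rightarrow> 'a" where
  "Tinv \<equiv> inv_into (space M) T"

lemma measurable_T [measurable]: "T \<in> M \<rightarrow>\<^sub>M M"
  using measure_preserving by (simp add: measure_preserving_map_def)

lemma measurable_Tinv [measurable]: "Tinv \<in> M \<rightarrow>\<^sub>M M"
  using invertible by (simp add: invertible_map_def)

lemma funpow_T_in_space: "x \<in> space M \<Longrightarrow> (T ^^ n) x \<in> space M"
  using measurable_space[OF measurable_funpow[OF measurable_T]] .

lemma funpow_Tinv_in_space: "x \<in> space M \<Longrightarrow> (Tinv ^^ n) x \<in> space M"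
  using measurable_space[OF measurable_funpow[OF measurable_Tinv]] .

lemma Tinv_T: "x \<in> space M \<Longrightarrow> Tinv (T x) = x"
  using invertible by (simp add: invertible_map_def bij_betw_imp_inj_on)

lemma T_Tinv: "x \<in> space M \<Longrightarrow> T (Tinv x) = x"
  using invertible by (simp add: invertible_map_def bij_betw_inv_into_right)

lemma funpow_Tinv_funpow_T:
  assumes "x \<in> space M" "m \<le> n"
  shows "(Tinv ^^ m) ((T ^^ n) x) = (T ^^ (n - m)) x"
  using assms(2)
proof (induction m)
  case (Suc m)
  then have "(Tinv ^^ Suc m) ((T ^^ n) x) = Tinv (T ((T ^^ (n - Suc m)) x))"
    by (simp add: Suc_diff_Suc[symmetric])
  then show ?case
    using Tinv_T funpow_T_in_space[OF assms(1)] by simp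
qed simp

lemma frequently_Tinv_orbit_funpow_T:
  assumes "x \<in> space M"
  shows "(\<exists>\<^sub>F q in sequentially. (Tinv ^^ q) ((T ^^ m) x) \<in> A)
    \<longleftrightarrow> (\<exists>\<^sub>F q in sequentially. (Tinv ^^ q) x \<in> A)"
proof -
  have "(Tinv ^^ (q + m)) ((T ^^ m) x) = (Tinv ^^ q) x" for q
    using funpow_Tinv_funpow_T[OF assms, of m m] by (simp add: funpow_add)
  then show ?thesis
    using eventually_sequentially_seg[of "\<lambda>q. (Tinv ^^ q) ((T ^^ m) x) \<notin> A" m]
    by (simp add: frequently_def)
qed

lemma sum_orbit_T_eq_sum_orbit_Tinv:
  assumes "x \<in> space M"
  shows "(\<Sum>i<n. g ((T ^^ i) x)) = (\<Sum>i<n. g ((Tinv ^^ Suc i) ((T ^^ n) x)))"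
proof -
  have "(\<Sum>i<n. g ((Tinv ^^ Suc i) ((T ^^ n) x))) = (\<Sum>i<n. g ((T ^^ (n - Suc i)) x))"
    by (intro sum.cong refl) (simp add: funpow_Tinv_funpow_T[OF assms] del: funpow.simps)
  also have "\<dots> = (\<Sum>i<n. g ((T ^^ i) x))"
    by (rule sum.nat_diff_reindex)
  finally show ?thesis ..
qed

lemma AE_frequently_T:
  "A \<in> sets M \<Longrightarrow> 0 < measure M A \<Longrightarrow> AE x in M. \<exists>\<^sub>F n in sequentially. (T ^^ n) x \<in> A"
  by (rule ergodic_recurrence[OF measure_preserving ergodic])

lemma AE_frequently_Tinv:
  "A \<in> sets M \<Longrightarrow> 0 < measure M A \<Longrightarrow> AE x in M. \<exists>\<^sub>F n in sequentially. (Tinv ^^ n) x \<in> A"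
  by (rule ergodic_recurrence[OF measure_preserving_map_inverse[OF measure_preserving invertible]
        ergodic_map_inverse[OF invertible ergodic]])

lemma hitting_time_le_return_time_Tinv:
  assumes "x \<in> space M" "\<exists>\<^sub>F n in sequentially. (Tinv ^^ n) x \<in> A"
  defines "\<tau> \<equiv> return_time T A x"
  shows "\<tau> \<le> return_time Tinv A ((T ^^ \<tau>) x)"
proof (rule ccontr)
  let ?m = "return_time Tinv A ((T ^^ \<tau>) x)"
  assume less: "\<not> \<tau> \<le> ?m"
  have "\<exists>\<^sub>F n in sequentially. (Tinv ^^ n) ((T ^^ \<tau>) x) \<in> A"
    using assms(2) frequently_Tinv_orbit_funpow_T[OF assms(1)] by simp
  note m = return_time_ge_1[OF this] return_time_returns[OF this]
  have "(T ^^ (\<tau> - ?m)) x \<in> A"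
    using m(2) less funpow_Tinv_funpow_T[OF assms(1), of ?m \<tau>] by simp
  then have "\<tau> \<le> \<tau> - ?m"
    using m(1) less unfolding \<tau>_def by (intro return_time_le) auto
  then show False
    using m(1) less by linarith
qed

end

locale separated_vanishing_decseqs = ergodic_automorphism M T for M :: "'a measure" and T +
  fixes B D :: "nat \<Rightarrow> 'a set"
  assumes B_sets: "\<And>k. B k \<in> sets M" and B_pos: "\<And>k. 0 < measure M (B k)"
    and B_decseq: "decseq B" and B_Inter: "(\<Inter>k. B k) = {}"
    and D_sets: "\<And>j. D j \<in> sets M" and D_pos: "\<And>j. 0 < measure M (D j)"
    and D_decseq: "decseq D" and D_Inter: "(\<Inter>j. D j) = {}"
    and B_D_separated: "\<And>x k j. x \<in> B k \<Longrightarrow> T x \<notin> D j"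
begin

abbreviation g where
  "g \<equiv> return_time_sum Tinv B"

abbreviation u where
  "u \<equiv> weighted_excursions Tinv g D"

abbreviation f where
  "f \<equiv> oscillating_function T Tinv B D"

lemma g_nonneg: "0 \<le> g x"
  by (rule return_time_sum_nonneg[OF B_decseq B_Inter])

lemma u_nonneg: "0 \<le> u x"
  by (rule weighted_excursions_nonneg[OF D_decseq D_Inter g_nonneg])

lemma borel_measurable_f: "f \<in> borel_measurable M"
  by (rule borel_measurable_oscillating_function) (auto intro: B_sets D_sets)

lemma sum_Tinv_orbit_f:
  assumes "x \<in> space M"
  shows "(\<Sum>i<Suc n. f ((Tinv ^^ i) x)) = (\<Sum>i<Suc n. g ((Tinv ^^ i) x)) + u ((Tinv ^^ n) x) - u (T x)"
proof (induction n)
  case (Suc n)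
  then show ?case
    using T_Tinv[OF funpow_Tinv_in_space[OF assms, of n]] by (simp add: oscillating_function_def)
qed (simp add: oscillating_function_def)

text \<open>Along a visit to \<open>B\<^sub>K\<close> the function \<open>u\<close> vanishes one step later, while the
  forward sum of \<open>g\<close> up to the visit is a backward sum from a point of \<open>B\<^sub>0,\<dots>,B\<^sub>K\<^sub>-\<^sub>1\<close>.\<close>
lemma frequently_avg_plus_ge:
  assumes x: "x \<in> space M"
    and T_freq: "\<And>k. \<exists>\<^sub>F n in sequentially. (T ^^ n) x \<in> B k"
    and Tinv_freq: "\<And>k. \<exists>\<^sub>F n in sequentially. (Tinv ^^ n) x \<in> B k"
  shows "\<exists>\<^sub>F n in sequentially. c \<le> avg_plus T f n x"
  unfolding frequently_sequentially
proof
  fix N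
  define K where "K = nat \<lceil>c\<rceil>"
  obtain m where "N \<le> m" and visit: "(T ^^ m) x \<in> B K"
    using T_freq by (auto simp: frequently_sequentially)
  define y where "y = (T ^^ m) x"
  have y_freq: "\<exists>\<^sub>F i in sequentially. (Tinv ^^ i) y \<in> B k" for k
    using Tinv_freq frequently_Tinv_orbit_funpow_T[OF x] by (simp add: y_def)
  have "next_hit (\<lambda>i. (Tinv ^^ i) y \<in> B k) 0 = 0" if "k < K" for k
    using visit B_decseq[THEN decseqD, of k K] that by (intro next_hit_eq_self) (auto simp: y_def)
  then have "real K * real (Suc m) \<le> (\<Sum>i<Suc m. g ((Tinv ^^ i) y))"
    using sum_return_time_sum_orbit_ge[OF B_decseq B_Inter y_freq, where K = K and n = "Suc m"]
    by simp
  also have "\<dots> = (\<Sum>i<Suc m. g ((T ^^ i) x))"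
    using sum_orbit_T_eq_sum_orbit_Tinv[OF x, where g = g and n = "Suc m"] Tinv_T[OF funpow_T_in_space[OF x]]
    by (simp add: funpow_swap1[of Tinv] y_def)
  also have "\<dots> \<le> (\<Sum>i<Suc m. f ((T ^^ i) x))"
    using sum_orbit_oscillating_function[where n = "Suc m" and x = x] u_nonneg[of x]
      weighted_excursions_eq_0[OF B_D_separated[OF visit]] by simp
  finally have "real K \<le> avg_plus T f (Suc m) x"
    unfolding avg_plus_def by (simp add: pos_le_divide_eq)
  then have "c \<le> avg_plus T f (Suc m) x"
    unfolding K_def by linarith
  then show "\<exists>n\<ge>N. c \<le> avg_plus T f n x"
    using \<open>N \<le> m\<close> le_SucI by blast
qed

text \<open>At the first visit to \<open>D\<^sub>j\<close> the jump of \<open>u\<close> is at least \<open>j\<close> times the length of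
  the elapsed stretch of orbit plus the forward sum of \<open>g\<close> along it.\<close>
lemma sum_f_le_first_visit:
  assumes x: "x \<in> space M" and "1 \<le> j"
    and T_freq: "\<exists>\<^sub>F n in sequentially. (T ^^ n) x \<in> D j"
    and Tinv_freq: "\<exists>\<^sub>F n in sequentially. (Tinv ^^ n) x \<in> D j"
  defines "\<tau> \<equiv> return_time T (D j) x"
  shows "(\<Sum>i<\<tau>. f ((T ^^ i) x)) \<le> u x - real j * real \<tau>"
proof -
  define y where "y = (T ^^ \<tau>) x"
  define S where "S = (\<Sum>i<\<tau>. g ((T ^^ i) x))"
  have "real \<tau> + S = (\<Sum>i<\<tau>. 1 + g ((Tinv ^^ Suc i) y))"
    using sum_orbit_T_eq_sum_orbit_Tinv[OF x, where g = g and n = \<tau>]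
    by (simp add: S_def y_def sum.distrib del: funpow.simps)
  also have "\<dots> \<le> excursion_weight Tinv g (D j) y"
    unfolding excursion_weight_def using hitting_time_le_return_time_Tinv[OF x Tinv_freq] g_nonneg
    by (intro sum_mono2) (auto simp: \<tau>_def y_def)
  finally have "real j * (real \<tau> + S) \<le> real j * excursion_weight Tinv g (D j) y"
    by (rule mult_left_mono) simp
  also have "\<dots> \<le> u y"
    using return_time_returns[OF T_freq]
    by (intro excursion_weight_le_weighted_excursions[OF D_decseq D_Inter g_nonneg])
      (simp add: y_def \<tau>_def)
  finally have "real j * real \<tau> + real j * S \<le> u y"
    by (simp add: distrib_left)
  moreover have "S \<le> real j * S"
  proof -
    have "0 \<le> S"
      unfolding S_def by (intro sum_nonneg g_nonneg)
    then show ?thesis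
      using mult_right_mono[of 1 "real j" S] \<open>1 \<le> j\<close> by simp
  qed
  moreover have "(\<Sum>i<\<tau>. f ((T ^^ i) x)) = S + u x - u y"
    using sum_orbit_oscillating_function[where n = \<tau> and x = x] by (simp add: S_def y_def)
  ultimately show ?thesis
    by linarith
qed

lemma frequently_avg_plus_le:
  assumes x: "x \<in> space M"
    and T_freq: "\<And>j. \<exists>\<^sub>F n in sequentially. (T ^^ n) x \<in> D j"
    and Tinv_freq: "\<And>j. \<exists>\<^sub>F n in sequentially. (Tinv ^^ n) x \<in> D j"
  shows "\<exists>\<^sub>F n in sequentially. avg_plus T f n x \<le> c"
  unfolding frequently_sequentially
proof
  fix N
  have "\<forall>\<^sub>F j in sequentially. \<forall>i\<in>{..<N}. (T ^^ i) x \<notin> D j"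
    using eventually_not_mem_vanishing_decseq[OF D_decseq D_Inter]
    by (intro eventually_ball_finite) auto
  moreover have "\<forall>\<^sub>F j in sequentially. 1 \<le> j \<and> u x - c \<le> real j"
    using eventually_ge_at_top[of "max 1 (nat \<lceil>u x - c\<rceil>)"] by eventually_elim linarith
  ultimately have "\<forall>\<^sub>F j in sequentially. (\<forall>i\<in>{..<N}. (T ^^ i) x \<notin> D j) \<and> 1 \<le> j \<and> u x - c \<le> real j"
    by (rule eventually_conj)
  then obtain j where j: "1 \<le> j" "u x - c \<le> real j" "\<And>i. i < N \<Longrightarrow> (T ^^ i) x \<notin> D j"
    by (auto dest: eventually_happens'[OF sequentially_bot])
  define \<tau> where "\<tau> = return_time T (D j) x"
  have \<tau>: "1 \<le> \<tau>" "(T ^^ \<tau>) x \<in> D j"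
    using return_time_ge_1[OF T_freq] return_time_returns[OF T_freq] by (auto simp: \<tau>_def)
  then have "N \<le> \<tau>"
    using j(3) not_le by blast
  have "(c + real j) * 1 \<le> (c + real j) * real \<tau>"
    using \<tau>(1) j(2) u_nonneg[of x] by (intro mult_left_mono) auto
  then have "(\<Sum>i<\<tau>. f ((T ^^ i) x)) \<le> c * real \<tau>"
    using sum_f_le_first_visit[OF x j(1) T_freq Tinv_freq] j(2)
    unfolding \<tau>_def[symmetric] by (simp add: distrib_right)
  then have "avg_plus T f \<tau> x \<le> c"
    unfolding avg_plus_def using \<tau>(1) by (simp add: pos_divide_le_eq)
  then show "\<exists>n\<ge>N. avg_plus T f n x \<le> c"
    using \<open>N \<le> \<tau>\<close> by blast
qed

text \<open>The backward sums of \<open>u - u \<circ> T\<close> are bounded below, while by Kac's telescoping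
  the backward averages of \<open>g\<close> eventually exceed every \<open>K\<close>.\<close>
lemma tendsto_avg_minus_at_top:
  assumes x: "x \<in> space M"
    and Tinv_freq: "\<And>k. \<exists>\<^sub>F n in sequentially. (Tinv ^^ n) x \<in> B k"
  shows "filterlim (\<lambda>n. avg_minus M T f n x) at_top sequentially"
  unfolding filterlim_at_top
proof
  fix Z :: real
  define K where "K = nat \<lceil>Z\<rceil> + 1"
  define C where "C = (\<Sum>k<K. real (next_hit (\<lambda>i. (Tinv ^^ i) x \<in> B k) 0)) + u (T x)"
  show "\<forall>\<^sub>F n in sequentially. Z \<le> avg_minus M T f n x"
    using eventually_ge_at_top[of "max 1 (nat \<lceil>C\<rceil>)"]
  proof eventually_elim
    case (elim n)
    have "C \<le> real n"
      using elim real_nat_ceiling_ge[of C] of_nat_mono[of "nat \<lceil>C\<rceil>" n] by linarith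
    moreover obtain m where "n = Suc m"
      using elim by (cases n) auto
    ultimately have n: "n = Suc m" "C \<le> real n" by auto
    have "real K * real n - C \<le> (\<Sum>i<n. g ((Tinv ^^ i) x)) - u (T x)"
      using sum_return_time_sum_orbit_ge[OF B_decseq B_Inter Tinv_freq, where K = K and n = n]
      by (simp add: C_def sum_subtractf)
    also have "\<dots> \<le> (\<Sum>i<n. f ((Tinv ^^ i) x))"
      using sum_Tinv_orbit_f[OF x, of m] u_nonneg[of "(Tinv ^^ m) x"] by (simp add: n)
    finally have "Z * real n \<le> (\<Sum>i<n. f ((Tinv ^^ i) x))"
      using n(2) mult_right_mono[of Z "real K - 1" "real n"] unfolding K_def
      by (simp add: algebra_simps) linarith
    then show "Z \<le> avg_minus M T f n x"
      unfolding avg_minus_def using n(1) by (simp add: pos_le_divide_eq)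
  qed
qed

lemma AE_oscillating_averages:
  "AE x in M. limsup (\<lambda>n. ereal (avg_plus T f n x)) = \<infinity> \<and>
    liminf (\<lambda>n. ereal (avg_plus T f n x)) = -\<infinity> \<and>
    filterlim (\<lambda>n. avg_minus M T f n x) at_top sequentially"
proof -
  have "AE x in M. \<forall>k. \<exists>\<^sub>F n in sequentially. (T ^^ n) x \<in> B k"
    "AE x in M. \<forall>k. \<exists>\<^sub>F n in sequentially. (Tinv ^^ n) x \<in> B k"
    "AE x in M. \<forall>j. \<exists>\<^sub>F n in sequentially. (T ^^ n) x \<in> D j"
    "AE x in M. \<forall>j. \<exists>\<^sub>F n in sequentially. (Tinv ^^ n) x \<in> D j"
    using AE_frequently_T AE_frequently_Tinv B_sets B_pos D_sets D_pos
    by (simp_all add: AE_all_countable)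
  then show ?thesis
    using AE_space
  proof eventually_elim
    case (elim x)
    then show ?case
      using frequently_avg_plus_ge frequently_avg_plus_le tendsto_avg_minus_at_top
      by (auto intro!: limsup_eq_PInfty_if_frequently_ge liminf_eq_MInfty_if_frequently_le)
  qed
qed

end

context ergodic_automorphism
begin

lemma obtain_separated_vanishing_decseqs:
  assumes "non_atomic M"
  obtains B D where "separated_vanishing_decseqs M T B D"
proof -
  obtain D0 where D0: "D0 \<in> sets M" "0 < measure M D0" "measure M D0 < 1"
    using assms sets.top[of M] prob_space unfolding non_atomic_def by (metis zero_less_one)
  define B0 where "B0 = T -` (space M - D0) \<inter> space M"
  have B0: "B0 \<in> sets M"
    using D0(1) unfolding B0_def by measurable
  have "measure M B0 = measure M (space M - D0)"
    unfolding B0_def using D0(1) by (intro measure_preserving_map_measure_vimage[OF measure_preserving]) auto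
  then have "0 < measure M B0"
    using prob_compl[OF D0(1)] D0(3) by simp
  then obtain B where B: "\<And>k. B k \<in> sets M" "\<And>k. B k \<subseteq> B0" "\<And>k. 0 < measure M (B k)"
    "decseq B" "(\<Inter>k. B k) = {}"
    using non_atomic_vanishing_decseq[OF assms B0] by blast
  obtain D where D: "\<And>j. D j \<in> sets M" "\<And>j. D j \<subseteq> D0" "\<And>j. 0 < measure M (D j)"
    "decseq D" "(\<Inter>j. D j) = {}"
    using non_atomic_vanishing_decseq[OF assms D0(1,2)] by blast
  have "x \<in> B k \<Longrightarrow> T x \<notin> D j" for x k j
    using B(2) D(2) unfolding B0_def by blast
  then show ?thesis
    using B D
    by (intro that[of B D] separated_vanishing_decseqs.intro ergodic_automorphism_axioms
        separated_vanishing_decseqs_axioms.intro) auto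
qed

end

theorem proposition1:
  fixes M :: "'a measure" and T :: "'a \<Rightarrow> 'a"
  assumes "prob_space M"
    and "non_atomic M"
    and "measure_preserving_map M T"
    and "invertible_map M T"
    and "ergodic_map M T"
  shows "\<exists>f :: 'a \<Rightarrow> real. f \<in> borel_measurable M \<and>
    (AE x in M.
       limsup (\<lambda>n. ereal (avg_plus T f n x)) = \<infinity> \<and>
       liminf (\<lambda>n. ereal (avg_plus T f n x)) = -\<infinity> \<and>
       filterlim (\<lambda>n. avg_minus M T f n x) at_top sequentially)"
proof -
  interpret ergodic_automorphism M T
    using assms by (simp add: ergodic_automorphism_def ergodic_automorphism_axioms_def)
  obtain B D where "separated_vanishing_decseqs M T B D"
    using obtain_separated_vanishing_decseqs[OF assms(2)] .
  then interpret separated_vanishing_decseqs M T B D .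
  show ?thesis
    using borel_measurable_f AE_oscillating_averages by blast
qed

end
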